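(* Let $X$ be a finite set, $0<p<1$, and let $\mathcal F\subseteq 2^X$ be a monotone increasing family. Then $$(1-p)\,I_p(\mathcal F)\;\ge\;(1-\mu_p(\mathcal F))\,\log_{1-p}\big(1-\mu_p(\mathcal F)\big),$$ with the convention $0\cdot\log_{1-p}0=0$.
   Context: For a finite set $X$ with $|X|=n$ and $p\in[0,1]$, $\mu_p$ is the product measure on $2^X$ given by $\mu_p(S)=p^{|S|}(1-p)^{n-|S|}$, and $\mu_p(\mathcal F)=\sum_{S\in\mathcal F}\mu_p(S)$. A family $\mathcal F\subseteq 2^X$ is monotone increasing if $B\supseteq A\in\mathcal F$ implies $B\in\mathcal F$. The total influence is $I_p(\mathcal F)=\sum_{i\in X}\mu_p(\{S\subseteq X: |\mathcal F\cap\{S,\,S\triangle\{i\}\}|=1\})$. Here $\log_q x=\ln x/\ln q$. *)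

theory Defs
  imports Complex_Main
begin

definition mu_set :: "'a set \<Rightarrow> real \<Rightarrow> 'a set \<Rightarrow> real" where
  "mu_set X p S = p ^ card S * (1 - p) ^ (card X - card S)"

definition mu :: "'a set \<Rightarrow> real \<Rightarrow> 'a set set \<Rightarrow> real" where
  "mu X p F = (\<Sum>S\<in>F. mu_set X p S)"

definition monotone_increasing :: "'a set \<Rightarrow> 'a set set \<Rightarrow> bool" where
  "monotone_increasing X F \<longleftrightarrow>
     F \<subseteq> Pow X \<and> (\<forall>A B. A \<in> F \<and> A \<subseteq> B \<and> B \<subseteq> X \<longrightarrow> B \<in> F)"

definition total_influence :: "'a set \<Rightarrow> real \<Rightarrow> 'a set set \<Rightarrow> real" where
  "total_influence X p F =
     (\<Sum>i\<in>X. mu X p {S. S \<subseteq> X \<and> card (F \<inter> {S, (if i \<in> S then S - {i} else insert i S)}) = 1})"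

definition xlog :: "real \<Rightarrow> real \<Rightarrow> real" where
  "xlog q x = (if x = 0 then 0 else x * log q x)"

end

theory Submission
  imports Defs
begin

(* With q = 1 - p and m = 1 - mu F, multiplying by ln q < 0 turns the claim into
   q ln q I(F) <= m ln m, proved by induction on X.  For x not in X, an increasing family F
   on insert x X splits into the increasing families F0 = F \<inter> Pow X and F1 = slice x X F
   on X, with F0 \<subseteq> F1.  Putting A = 1 - mu F0 and B = 1 - mu F1, so 0 <= B <= A, one has
   1 - mu F = q A + p B and I(F) = (A - B) + q I(F0) + p I(F1), where A - B is the influence
   of x itself.  After the induction hypotheses, what remains is
   q A ln A + p B ln B + q (A - B) ln q <= s ln s for s = q A + p B; this is concavity of ln,
   as s = (B/A) A + (1 - B/A) q A, together with B <= s. *)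

lemma ln_convex_combination_ge:
  fixes t a b :: real
  assumes t: "0 \<le> t" "t \<le> 1" and ab: "0 < a" "0 < b"
  shows "t * ln a + (1 - t) * ln b \<le> ln (t * a + (1 - t) * b)"
proof -
  define m where "m = t * a + (1 - t) * b"
  have "m > 0"
    using t ab unfolding m_def by (cases "t = 0") (auto intro: add_pos_nonneg)
  have "t * ln (a / m) \<le> t * (a / m - 1)"
    using t ab \<open>m > 0\<close> by (intro mult_left_mono ln_le_minus_one) auto
  moreover have "(1 - t) * ln (b / m) \<le> (1 - t) * (b / m - 1)"
    using t ab \<open>m > 0\<close> by (intro mult_left_mono ln_le_minus_one) auto
  moreover have "t * (a / m - 1) + (1 - t) * (b / m - 1) = 0"
    using \<open>m > 0\<close> unfolding m_def by (simp add: field_simps)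
  ultimately have "t * (ln a - ln m) + (1 - t) * (ln b - ln m) \<le> 0"
    using ab \<open>m > 0\<close> by (simp add: ln_div)
  then show ?thesis unfolding m_def by (simp add: algebra_simps)
qed

lemma xlnx_mix_le:
  fixes p A B :: real
  assumes p: "0 \<le> p" "p < 1" and B: "0 \<le> B" "B \<le> A"
  defines "s \<equiv> (1 - p) * A + p * B"
  shows "(1 - p) * A * ln A + p * B * ln B + (1 - p) * (A - B) * ln (1 - p) \<le> s * ln s"
proof (cases "A = 0")
  case True
  then show ?thesis using B by (simp add: s_def)
next
  case False
  let ?q = "1 - p" and ?t = "B / A"
  have A: "A > 0" and q: "?q > 0" using False B p by auto
  have "s - B = ?q * (A - B)" unfolding s_def by (simp add: algebra_simps)
  moreover have "0 \<le> ?q * (A - B)" using B q by simp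
  ultimately have "B \<le> s" by linarith
  have "?t \<le> 1" using A B by simp
  have mix: "(1 - ?t) * (?q * A) + ?t * A = s"
    using A unfolding s_def by (simp add: field_simps)
  have "(1 - ?t) * ln (?q * A) + ?t * ln A \<le> ln ((1 - ?t) * (?q * A) + ?t * A)"
    using ln_convex_combination_ge[of "1 - ?t" "?q * A" A] A q B \<open>?t \<le> 1\<close> by simp
  then have "?q * A * ((1 - ?t) * ln (?q * A) + ?t * ln A) \<le> ?q * A * ln s"
    unfolding mix using A q by (intro mult_left_mono) auto
  moreover have "?q * A * ((1 - ?t) * ln (?q * A) + ?t * ln A)
      = ?q * (A - B) * ln (?q * A) + ?q * B * ln A"
    using A by (simp add: field_simps)
  ultimately have concave: "?q * (A - B) * ln (?q * A) + ?q * B * ln A \<le> ?q * A * ln s"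
    by simp
  have mono: "p * B * ln B \<le> p * B * ln s"
    using B p \<open>B \<le> s\<close> by (cases "B = 0") (auto intro!: mult_left_mono ln_mono)
  have "?q * A * ln A + p * B * ln B + ?q * (A - B) * ln ?q
      = ?q * (A - B) * ln (?q * A) + ?q * B * ln A + p * B * ln B"
    unfolding ln_mult_pos[OF q A] by (simp add: algebra_simps)
  also have "\<dots> \<le> ?q * A * ln s + p * B * ln s"
    using concave mono by linarith
  also have "\<dots> = s * ln s"
    unfolding s_def by (simp add: algebra_simps)
  finally show ?thesis .
qed

definition slice :: "'a \<Rightarrow> 'a set \<Rightarrow> 'a set set \<Rightarrow> 'a set set" where
  "slice x X H = {T. T \<subseteq> X \<and> insert x T \<in> H}"

lemma mu_set_insert_absent:
  assumes "finite X" "x \<notin> X" "T \<subseteq> X"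
  shows "mu_set (insert x X) p T = (1 - p) * mu_set X p T"
proof -
  have "card T \<le> card X" using assms by (simp add: card_mono)
  then have "card (insert x X) - card T = Suc (card X - card T)" using assms by simp
  then show ?thesis unfolding mu_set_def by simp
qed

lemma mu_set_insert_present:
  assumes "finite X" "x \<notin> X" "T \<subseteq> X"
  shows "mu_set (insert x X) p (insert x T) = p * mu_set X p T"
proof -
  have "x \<notin> T" "finite T" using assms finite_subset by auto
  then show ?thesis unfolding mu_set_def using assms by simp
qed

lemma mu_insert:
  assumes X: "finite X" "x \<notin> X" and H: "H \<subseteq> Pow (insert x X)"
  shows "mu (insert x X) p H = (1 - p) * mu X p (H \<inter> Pow X) + p * mu X p (slice x X H)"
proof -
  let ?H0 = "H \<inter> Pow X" and ?H1 = "slice x X H"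
  have fin: "finite ?H0" "finite ?H1"
    using X by (auto intro: finite_subset[of _ "Pow X"] simp: slice_def)
  have split: "H = ?H0 \<union> insert x ` ?H1"
  proof (intro equalityI subsetI)
    fix S assume S: "S \<in> H"
    show "S \<in> ?H0 \<union> insert x ` ?H1"
    proof (cases "x \<in> S")
      case True
      then have "S = insert x (S - {x})" "S - {x} \<in> ?H1"
        using S H by (auto simp: slice_def insert_absorb)
      then show ?thesis by blast
    qed (use S H in auto)
  qed (auto simp: slice_def)
  have disjoint: "?H0 \<inter> insert x ` ?H1 = {}" using X by (auto simp: slice_def)
  have "inj_on (insert x) ?H1"
    using X by (intro inj_onI) (auto simp: slice_def insert_ident)
  then have "mu (insert x X) p (insert x ` ?H1) = (\<Sum>T\<in>?H1. mu_set (insert x X) p (insert x T))"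
    unfolding mu_def by (simp add: sum.reindex)
  also have "\<dots> = p * mu X p ?H1"
    unfolding mu_def sum_distrib_left using X
    by (intro sum.cong) (auto simp: slice_def mu_set_insert_present)
  finally have present: "mu (insert x X) p (insert x ` ?H1) = p * mu X p ?H1" .
  have absent: "mu (insert x X) p ?H0 = (1 - p) * mu X p ?H0"
    unfolding mu_def sum_distrib_left using X by (intro sum.cong) (auto simp: mu_set_insert_absent)
  have "mu (insert x X) p H = mu (insert x X) p ?H0 + mu (insert x X) p (insert x ` ?H1)"
    unfolding mu_def by (subst split, rule sum.union_disjoint) (use fin disjoint in auto)
  then show ?thesis unfolding absent present .
qed

lemma mu_mono:
  assumes "finite X" "0 \<le> p" "p \<le> 1" "G \<subseteq> H" "H \<subseteq> Pow X"
  shows "mu X p G \<le> mu X p H"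
  unfolding mu_def mu_set_def using assms by (intro sum_mono2) (auto intro: finite_subset)

lemma mu_diff:
  assumes "finite X" "G \<subseteq> H" "H \<subseteq> Pow X"
  shows "mu X p (H - G) = mu X p H - mu X p G"
  unfolding mu_def using assms by (intro sum_diff) (auto intro: finite_subset)

lemma mu_Pow: "finite X \<Longrightarrow> mu X p (Pow X) = 1"
proof (induction X rule: finite_induct)
  case empty
  then show ?case by (simp add: mu_def mu_set_def)
next
  case (insert x X)
  moreover have "Pow (insert x X) \<inter> Pow X = Pow X" "slice x X (Pow (insert x X)) = Pow X"
    by (auto simp: slice_def)
  ultimately show ?case by (simp add: mu_insert)
qed

lemma mu_le_1: "finite X \<Longrightarrow> 0 \<le> p \<Longrightarrow> p \<le> 1 \<Longrightarrow> H \<subseteq> Pow X \<Longrightarrow> mu X p H \<le> 1"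
  using mu_mono[of X p H "Pow X"] mu_Pow[of X p] by simp

lemma monotone_increasingI:
  "F \<subseteq> Pow X \<Longrightarrow> (\<And>A B. A \<in> F \<Longrightarrow> A \<subseteq> B \<Longrightarrow> B \<subseteq> X \<Longrightarrow> B \<in> F) \<Longrightarrow> monotone_increasing X F"
  unfolding monotone_increasing_def by blast

lemma monotone_increasingD:
  "monotone_increasing X F \<Longrightarrow> A \<in> F \<Longrightarrow> A \<subseteq> B \<Longrightarrow> B \<subseteq> X \<Longrightarrow> B \<in> F"
  unfolding monotone_increasing_def by blast

lemma monotone_increasing_subset_Pow: "monotone_increasing X F \<Longrightarrow> F \<subseteq> Pow X"
  unfolding monotone_increasing_def by blast

lemma monotone_increasing_Int_Pow:
  assumes "monotone_increasing (insert x X) F"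
  shows "monotone_increasing X (F \<inter> Pow X)"
proof (rule monotone_increasingI)
  fix A B assume "A \<in> F \<inter> Pow X" "A \<subseteq> B" "B \<subseteq> X"
  then show "B \<in> F \<inter> Pow X"
    using monotone_increasingD[OF assms, of A B] by blast
qed blast

lemma monotone_increasing_slice:
  assumes "monotone_increasing (insert x X) F"
  shows "monotone_increasing X (slice x X F)"
proof (rule monotone_increasingI)
  fix A B assume "A \<in> slice x X F" "A \<subseteq> B" "B \<subseteq> X"
  then show "B \<in> slice x X F"
    using monotone_increasingD[OF assms, of "insert x A" "insert x B"] by (auto simp: slice_def)
qed (auto simp: slice_def)

lemma Int_Pow_subset_slice:
  assumes "monotone_increasing (insert x X) F"
  shows "F \<inter> Pow X \<subseteq> slice x X F"
proof
  fix T assume "T \<in> F \<inter> Pow X"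
  then have "insert x T \<in> F" "T \<subseteq> X"
    using monotone_increasingD[OF assms, of T "insert x T"] by auto
  then show "T \<in> slice x X F" unfolding slice_def by blast
qed

definition flip :: "'a \<Rightarrow> 'a set \<Rightarrow> 'a set" where
  "flip i S = (if i \<in> S then S - {i} else insert i S)"

definition influence :: "'a set \<Rightarrow> real \<Rightarrow> 'a set set \<Rightarrow> 'a \<Rightarrow> real" where
  "influence X p F i = mu X p {S. S \<subseteq> X \<and> (S \<in> F) \<noteq> (flip i S \<in> F)}"

lemma card_Int_doubleton_eq_1:
  "S \<noteq> S' \<Longrightarrow> card (F \<inter> {S, S'}) = 1 \<longleftrightarrow> (S \<in> F) \<noteq> (S' \<in> F)"
  by (cases "S \<in> F"; cases "S' \<in> F") (auto simp: Int_insert_right)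

lemma total_influence_eq_sum_influence:
  "total_influence X p F = (\<Sum>i\<in>X. influence X p F i)"
proof -
  have "card (F \<inter> {S, flip i S}) = 1 \<longleftrightarrow> (S \<in> F) \<noteq> (flip i S \<in> F)" for i S
    by (rule card_Int_doubleton_eq_1) (auto simp: flip_def)
  then show ?thesis
    unfolding total_influence_def influence_def by (simp only: flip_def)
qed

lemma influence_insert_self:
  assumes X: "finite X" "x \<notin> X" and F: "monotone_increasing (insert x X) F"
  shows "influence (insert x X) p F x = mu X p (slice x X F) - mu X p (F \<inter> Pow X)"
proof -
  let ?D = "slice x X F - F \<inter> Pow X"
  have "flip x (insert x T) = T" "flip x T = insert x T" if "T \<subseteq> X" for T
    using that X by (auto simp: flip_def)
  then have "{S. S \<subseteq> insert x X \<and> (S \<in> F) \<noteq> (flip x S \<in> F)} \<inter> Pow X = ?D"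
    "slice x X {S. S \<subseteq> insert x X \<and> (S \<in> F) \<noteq> (flip x S \<in> F)} = ?D"
    using Int_Pow_subset_slice[OF F] by (auto simp: slice_def)
  then have "influence (insert x X) p F x = mu X p ?D"
    unfolding influence_def using X by (subst mu_insert) (auto simp: algebra_simps)
  also have "\<dots> = mu X p (slice x X F) - mu X p (F \<inter> Pow X)"
    using X Int_Pow_subset_slice[OF F] by (intro mu_diff) (auto simp: slice_def)
  finally show ?thesis .
qed

lemma influence_insert_other:
  assumes X: "finite X" "x \<notin> X" and i: "i \<in> X"
  shows "influence (insert x X) p F i
    = (1 - p) * influence X p (F \<inter> Pow X) i + p * influence X p (slice x X F) i"
proof -
  have "flip i T \<subseteq> X" "flip i (insert x T) = insert x (flip i T)" if "T \<subseteq> X" for T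
    using that X i by (auto simp: flip_def)
  then have "{S. S \<subseteq> insert x X \<and> (S \<in> F) \<noteq> (flip i S \<in> F)} \<inter> Pow X
      = {S. S \<subseteq> X \<and> (S \<in> F \<inter> Pow X) \<noteq> (flip i S \<in> F \<inter> Pow X)}"
    "slice x X {S. S \<subseteq> insert x X \<and> (S \<in> F) \<noteq> (flip i S \<in> F)}
      = {S. S \<subseteq> X \<and> (S \<in> slice x X F) \<noteq> (flip i S \<in> slice x X F)}"
    by (auto simp: slice_def)
  then show ?thesis
    unfolding influence_def using X by (subst mu_insert) auto
qed

lemma total_influence_insert:
  assumes X: "finite X" "x \<notin> X" and F: "monotone_increasing (insert x X) F"
  shows "total_influence (insert x X) p F
    = (mu X p (slice x X F) - mu X p (F \<inter> Pow X))
      + (1 - p) * total_influence X p (F \<inter> Pow X) + p * total_influence X p (slice x X F)"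
  using X influence_insert_self[OF X F] influence_insert_other[OF X]
  by (simp add: total_influence_eq_sum_influence sum.distrib sum_distrib_left)

lemma total_influence_ln_bound:
  assumes "finite X" "0 \<le> p" "p < 1" "monotone_increasing X F"
  shows "(1 - p) * ln (1 - p) * total_influence X p F \<le> (1 - mu X p F) * ln (1 - mu X p F)"
  using assms
proof (induction X arbitrary: F rule: finite_induct)
  case empty
  then have "F \<subseteq> {{}}" using monotone_increasing_subset_Pow by fastforce
  then have "F = {} \<or> F = {{}}" by (simp add: subset_singleton_iff)
  then show ?case by (auto simp: total_influence_def mu_def mu_set_def)
next
  case (insert x X)
  let ?q = "1 - p" and ?F0 = "F \<inter> Pow X" and ?F1 = "slice x X F"
  define A where "A = 1 - mu X p ?F0"
  define B where "B = 1 - mu X p ?F1"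
  have F0: "monotone_increasing X ?F0" and F1: "monotone_increasing X ?F1"
    using insert.prems by (simp_all add: monotone_increasing_Int_Pow monotone_increasing_slice)
  have "0 \<le> B"
    using mu_le_1[OF insert.hyps(1) _ _ monotone_increasing_subset_Pow[OF F1]] insert.prems(1,2)
    unfolding B_def by simp
  moreover have "mu X p ?F0 \<le> mu X p ?F1"
    using insert.hyps(1) insert.prems(1,2) Int_Pow_subset_slice[OF insert.prems(3)]
    by (intro mu_mono) (auto simp: slice_def)
  then have "B \<le> A" unfolding A_def B_def by simp
  ultimately have step: "?q * A * ln A + p * B * ln B + ?q * (A - B) * ln ?q
      \<le> (?q * A + p * B) * ln (?q * A + p * B)"
    using insert.prems by (intro xlnx_mix_le) auto
  have mu_F: "1 - mu (insert x X) p F = ?q * A + p * B"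
    using mu_insert[OF insert.hyps monotone_increasing_subset_Pow[OF insert.prems(3)]]
    unfolding A_def B_def by (simp add: algebra_simps)
  have "?q * ln ?q * total_influence (insert x X) p F
      = ?q * (A - B) * ln ?q + ?q * (?q * ln ?q * total_influence X p ?F0)
        + p * (?q * ln ?q * total_influence X p ?F1)"
    unfolding total_influence_insert[OF insert.hyps insert.prems(3)] A_def B_def
    by (simp add: algebra_simps)
  also have "\<dots> \<le> ?q * (A - B) * ln ?q + ?q * (A * ln A) + p * (B * ln B)"
  proof -
    have "?q * (?q * ln ?q * total_influence X p ?F0) \<le> ?q * (A * ln A)"
      using insert.IH[OF insert.prems(1,2) F0] insert.prems(2) unfolding A_def
      by (intro mult_left_mono) auto
    moreover have "p * (?q * ln ?q * total_influence X p ?F1) \<le> p * (B * ln B)"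
      using insert.IH[OF insert.prems(1,2) F1] insert.prems(1) unfolding B_def
      by (intro mult_left_mono) auto
    ultimately show ?thesis by linarith
  qed
  also have "\<dots> \<le> (?q * A + p * B) * ln (?q * A + p * B)"
    using step by (simp add: ac_simps)
  finally show ?case unfolding mu_F .
qed

theorem mainTheorem2:
  fixes X :: "'a set" and p :: real and F :: "'a set set"
  assumes "finite X" and "0 < p" and "p < 1"
    and "monotone_increasing X F"
  shows "(1 - p) * total_influence X p F \<ge> xlog (1 - p) (1 - mu X p F)"
proof -
  let ?m = "1 - mu X p F"
  have "ln (1 - p) < 0" using assms by simp
  moreover have "(1 - p) * total_influence X p F * ln (1 - p) \<le> ?m * ln ?m"
    using total_influence_ln_bound[of X p F] assms by (simp add: mult_ac)
  ultimately have "?m * ln ?m / ln (1 - p) \<le> (1 - p) * total_influence X p F"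
    by (simp add: neg_divide_le_eq)
  moreover have "xlog (1 - p) ?m = ?m * ln ?m / ln (1 - p)"
    unfolding xlog_def log_def by simp
  ultimately show ?thesis by simp
qed

end
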